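(* Let $\mu$ be a probability distribution on $Q_d$ such that $\mu(X)\ge\mu(Y)$ whenever $X\subseteq Y$. Then $(\mathbf 0,\mathbf 0)$ is an equilibrium. Similarly, if $\mu(X)\le\mu(Y)$ whenever $X\subseteq Y$, then $(\mathbf 1,\mathbf 1)$ is an equilibrium.
   Context: $Q_d=\{0,1\}^d$ with the Hamming distance $d(X,Y)=|\{i: x_i\neq y_i\}|$; for $X,Y\in Q_d$, $X\subseteq Y$ means $x_i\le y_i$ for all $i$. A probability distribution on $Q_d$ is a function $\mu:Q_d\to\mathbb R_{\ge0}$ with $\sum_{V\in Q_d}\mu(V)=1$, extended to subsets by $\mu(\mathcal A)=\sum_{V\in\mathcal A}\mu(V)$. For $A,B\in Q_d$ let $V(A,B)=\{X\in Q_d: d(X,A)<d(X,B)\}$ and $T(A,B)=\{X\in Q_d: d(X,A)=d(X,B)\}$. Payoffs: $P_1(A,B)=\mu(V(A,B))+\frac12\mu(T(A,B))$, $P_2(A,B)=\mu(V(B,A))+\frac12\mu(T(A,B))$. $(A,B)$ is an equilibrium if $P_1(A,B)\ge P_1(A',B)$ for all $A'$ and $P_2(A,B)\ge P_2(A,B')$ for all $B'$. $\mathbf 0=(0,\dots,0)$, $\mathbf 1=(1,\dots,1)$. *)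

theory Defs
  imports Complex_Main
begin

text \<open>The hypercube Q_d: 0/1-vectors of length d, represented as bool lists
  (True = 1, False = 0).\<close>
definition cube :: "nat \<Rightarrow> bool list set" where
  "cube d = {xs. length xs = d}"

definition hamming :: "bool list \<Rightarrow> bool list \<Rightarrow> nat" where
  "hamming X Y = card {i. i < length X \<and> X ! i \<noteq> Y ! i}"

definition vsubset :: "bool list \<Rightarrow> bool list \<Rightarrow> bool" where
  "vsubset X Y \<longleftrightarrow> length X = length Y \<and> (\<forall>i < length X. X ! i \<longrightarrow> Y ! i)"

definition prob_dist :: "nat \<Rightarrow> (bool list \<Rightarrow> real) \<Rightarrow> bool" where
  "prob_dist d \<mu> \<longleftrightarrow> (\<forall>V \<in> cube d. \<mu> V \<ge> 0) \<and> (\<Sum>V \<in> cube d. \<mu> V) = 1"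

definition meas :: "(bool list \<Rightarrow> real) \<Rightarrow> bool list set \<Rightarrow> real" where
  "meas \<mu> S = (\<Sum>V \<in> S. \<mu> V)"

definition Vor :: "nat \<Rightarrow> bool list \<Rightarrow> bool list \<Rightarrow> bool list set" where
  "Vor d A B = {X \<in> cube d. hamming X A < hamming X B}"

definition Tie :: "nat \<Rightarrow> bool list \<Rightarrow> bool list \<Rightarrow> bool list set" where
  "Tie d A B = {X \<in> cube d. hamming X A = hamming X B}"

definition payoff1 :: "nat \<Rightarrow> (bool list \<Rightarrow> real) \<Rightarrow> bool list \<Rightarrow> bool list \<Rightarrow> real" where
  "payoff1 d \<mu> A B = meas \<mu> (Vor d A B) + meas \<mu> (Tie d A B) / 2"

definition payoff2 :: "nat \<Rightarrow> (bool list \<Rightarrow> real) \<Rightarrow> bool list \<Rightarrow> bool list \<Rightarrow> real" where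
  "payoff2 d \<mu> A B = meas \<mu> (Vor d B A) + meas \<mu> (Tie d A B) / 2"

definition equilibrium :: "nat \<Rightarrow> (bool list \<Rightarrow> real) \<Rightarrow> bool list \<Rightarrow> bool list \<Rightarrow> bool" where
  "equilibrium d \<mu> A B \<longleftrightarrow> A \<in> cube d \<and> B \<in> cube d \<and>
     (\<forall>A' \<in> cube d. payoff1 d \<mu> A B \<ge> payoff1 d \<mu> A' B) \<and>
     (\<forall>B' \<in> cube d. payoff2 d \<mu> A B \<ge> payoff2 d \<mu> A B')"

definition zeros :: "nat \<Rightarrow> bool list" where "zeros d = replicate d False"
definition ones :: "nat \<Rightarrow> bool list" where "ones d = replicate d True"

end

theory Submission
  imports Defs
begin

text \<open>Against an opponent at \<open>0\<close>, a player at \<open>A\<close> wins the points \<open>X\<close> with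
  \<open>gain A X = d(X,0) - d(X,A) > 0\<close> and loses those with \<open>gain A X < 0\<close>. For antitone
  \<open>\<mu>\<close> the mass where the gain exceeds \<open>t\<close> is at most the mass where it is below \<open>-t\<close>,
  by induction on \<open>d\<close>: splitting off a coordinate where \<open>A\<close> is 1 shifts the threshold
  by \<open>\<plusminus>1\<close> on the two half-cubes, and the half-cube with that coordinate 0 carries
  the larger weight. Hence \<open>0\<close> is a best reply to \<open>0\<close>. The statement for \<open>1\<close>
  follows by complementing all coordinates.\<close>

fun gain :: "bool list \<Rightarrow> bool list \<Rightarrow> int" where
  "gain (a # A) (x # X) = (if a then (if x then 1 else -1) else 0) + gain A X"
| "gain _ _ = 0"

lemma finite_cube: "finite (cube d)"
  using finite_lists_length_eq[of "UNIV :: bool set" d] by (simp add: cube_def)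

lemma cube_0: "cube 0 = {[]}"
  by (auto simp: cube_def)

lemma cube_Suc: "cube (Suc d) = Cons True ` cube d \<union> Cons False ` cube d"
proof
  show "cube (Suc d) \<subseteq> Cons True ` cube d \<union> Cons False ` cube d"
  proof
    fix X assume "X \<in> cube (Suc d)"
    then obtain x X' where "X = x # X'" "length X' = d"
      by (cases X) (auto simp: cube_def)
    then show "X \<in> Cons True ` cube d \<union> Cons False ` cube d"
      by (cases x) (auto simp: cube_def)
  qed
qed (auto simp: cube_def)

lemma sum_cube_Suc:
  "(\<Sum>X\<in>cube (Suc d). f X) = (\<Sum>X\<in>cube d. f (True # X)) + (\<Sum>X\<in>cube d. f (False # X))"
proof -
  have "(\<Sum>X\<in>cube (Suc d). f X) = (\<Sum>X\<in>Cons True ` cube d. f X) + (\<Sum>X\<in>Cons False ` cube d. f X)"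
    unfolding cube_Suc by (rule sum.union_disjoint) (auto simp: finite_cube)
  then show ?thesis
    by (simp add: sum.reindex)
qed

lemma vsubset_Cons: "vsubset (x # X) (y # Y) \<longleftrightarrow> (x \<longrightarrow> y) \<and> vsubset X Y"
  unfolding vsubset_def by (auto simp: nth_Cons' less_Suc_eq_0_disj)

lemma vsubset_refl: "vsubset X X"
  by (simp add: vsubset_def)

lemma meas_filter: "meas \<mu> {X\<in>cube d. P X} = (\<Sum>X\<in>cube d. if P X then \<mu> X else 0)"
  unfolding meas_def by (simp add: sum.inter_filter finite_cube)

lemma meas_gain_tails_le:
  fixes \<mu> :: "bool list \<Rightarrow> real" and t :: int
  assumes "length A = d"
    and "\<forall>X\<in>cube d. \<forall>Y\<in>cube d. vsubset X Y \<longrightarrow> \<mu> Y \<le> \<mu> X"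
  shows "meas \<mu> {X\<in>cube d. t < gain A X} \<le> meas \<mu> {X\<in>cube d. gain A X < -t}"
  using assms unfolding meas_filter
proof (induction d arbitrary: A \<mu> t)
  case 0
  show ?case unfolding cube_0 by simp
next
  case (Suc d)
  obtain a A' where A: "A = a # A'" "length A' = d"
    using Suc.prems(1) by (cases A) auto
  define \<mu>1 where "\<mu>1 X = \<mu> (True # X)" for X
  define \<mu>0 where "\<mu>0 X = \<mu> (False # X)" for X
  have in_cube: "X \<in> cube d \<Longrightarrow> b # X \<in> cube (Suc d)" for X b
    by (simp add: cube_def)
  have mono1: "\<forall>X\<in>cube d. \<forall>Y\<in>cube d. vsubset X Y \<longrightarrow> \<mu>1 Y \<le> \<mu>1 X"
    and mono0: "\<forall>X\<in>cube d. \<forall>Y\<in>cube d. vsubset X Y \<longrightarrow> \<mu>0 Y \<le> \<mu>0 X"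
    using Suc.prems(2) in_cube by (auto simp: \<mu>1_def \<mu>0_def vsubset_Cons)
  have \<mu>1_le_\<mu>0: "X \<in> cube d \<Longrightarrow> \<mu>1 X \<le> \<mu>0 X" for X
    using Suc.prems(2) in_cube[of X] by (auto simp: \<mu>1_def \<mu>0_def vsubset_Cons vsubset_refl)
  let ?up = "\<lambda>m s. \<Sum>X\<in>cube d. if s < gain A' X then m X else (0::real)"
  let ?low = "\<lambda>m s. \<Sum>X\<in>cube d. if gain A' X < -s then m X else (0::real)"
  let ?up' = "\<lambda>s. \<Sum>X\<in>cube (Suc d). if s < gain A X then \<mu> X else (0::real)"
  let ?low' = "\<lambda>s. \<Sum>X\<in>cube (Suc d). if gain A X < -s then \<mu> X else (0::real)"
  show ?case
  proof (cases a)
    case True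
    have "?up' t = ?up \<mu>1 (t - 1) + ?up \<mu>0 (t + 1)"
      unfolding sum_cube_Suc using True A
      by (intro arg_cong2[where f = "(+)"] sum.cong) (auto simp: \<mu>1_def \<mu>0_def)
    \<comment> \<open>moving the band \<open>t - 1 < gain A' X \<le> t + 1\<close> from the weight \<open>\<mu>1\<close> to \<open>\<mu>0 \<ge> \<mu>1\<close>\<close>
    also have "\<dots> \<le> ?up \<mu>1 (t + 1) + ?up \<mu>0 (t - 1)"
      unfolding sum.distrib[symmetric] by (rule sum_mono) (use \<mu>1_le_\<mu>0 in auto)
    also have "\<dots> \<le> ?low \<mu>1 (t + 1) + ?low \<mu>0 (t - 1)"
      using Suc.IH[OF A(2) mono1, of "t + 1"] Suc.IH[OF A(2) mono0, of "t - 1"] by simp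
    also have "\<dots> = ?low' t"
      unfolding sum_cube_Suc using True A
      by (intro arg_cong2[where f = "(+)"] sum.cong) (auto simp: \<mu>1_def \<mu>0_def)
    finally show ?thesis .
  next
    case False
    have "?up' t = ?up \<mu>1 t + ?up \<mu>0 t" "?low' t = ?low \<mu>1 t + ?low \<mu>0 t"
      unfolding sum_cube_Suc using False A
      by (intro arg_cong2[where f = "(+)"] sum.cong; simp add: \<mu>1_def \<mu>0_def)+
    then show ?thesis
      using Suc.IH[OF A(2) mono1, of t] Suc.IH[OF A(2) mono0, of t] by simp
  qed
qed

lemma hamming_Nil: "hamming [] Y = 0"
  by (simp add: hamming_def)

lemma hamming_Cons: "hamming (x # X) (y # Y) = (if x \<noteq> y then 1 else 0) + hamming X Y"
proof -
  let ?D = "{i. i < length X \<and> X ! i \<noteq> Y ! i}"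
  have "{i. i < length (x # X) \<and> (x # X) ! i \<noteq> (y # Y) ! i}
      = (if x \<noteq> y then {0} else {}) \<union> Suc ` ?D"
    by (auto simp: nth_Cons' less_Suc_eq_0_disj)
  moreover have "card ((if x \<noteq> y then {0} else {}) \<union> Suc ` ?D)
      = card (if x \<noteq> y then {0::nat} else {}) + card ?D"
    by (subst card_Un_disjoint) (auto simp: card_image)
  ultimately show ?thesis
    unfolding hamming_def by simp
qed

lemma gain_eq_hamming_diff:
  "length A = length X \<Longrightarrow>
   gain A X = int (hamming X (replicate (length X) False)) - int (hamming X A)"
proof (induction X arbitrary: A)
  case Nil
  then show ?case by (simp add: hamming_Nil)
next
  case (Cons x X)
  then obtain a A' where "A = a # A'" "length A' = length X"
    by (cases A) auto
  with Cons.IH[of A'] show ?case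
    by (auto simp: hamming_Cons)
qed

lemma Tie_commute: "Tie d A B = Tie d B A"
  by (auto simp: Tie_def)

lemma payoff1_zeros_self: "payoff1 d \<mu> (zeros d) (zeros d) = meas \<mu> (cube d) / 2"
  by (simp add: payoff1_def Vor_def Tie_def meas_def)

lemma payoff1_le_zeros_self:
  assumes "A \<in> cube d"
    and "\<forall>X\<in>cube d. \<forall>Y\<in>cube d. vsubset X Y \<longrightarrow> \<mu> Y \<le> \<mu> X"
  shows "payoff1 d \<mu> A (zeros d) \<le> payoff1 d \<mu> (zeros d) (zeros d)"
proof -
  have gain: "X \<in> cube d \<Longrightarrow> gain A X = int (hamming X (zeros d)) - int (hamming X A)" for X
    using gain_eq_hamming_diff[of A X] assms(1) by (simp add: cube_def zeros_def)
  have "payoff1 d \<mu> A (zeros d)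
      = (\<Sum>X\<in>cube d. if 0 < gain A X then \<mu> X else if gain A X = 0 then \<mu> X / 2 else 0)"
    unfolding payoff1_def Vor_def Tie_def meas_filter sum_divide_distrib sum.distrib[symmetric]
    by (rule sum.cong) (auto simp: gain)
  also have "\<dots> = (\<Sum>X\<in>cube d. \<mu> X / 2
      + ((if 0 < gain A X then \<mu> X else 0) - (if gain A X < 0 then \<mu> X else 0)) / 2)"
    by (rule sum.cong) auto
  also have "\<dots> = meas \<mu> (cube d) / 2
      + (meas \<mu> {X\<in>cube d. 0 < gain A X} - meas \<mu> {X\<in>cube d. gain A X < 0}) / 2"
    unfolding meas_filter
    by (simp add: meas_def sum.distrib sum_subtractf[symmetric] sum_divide_distrib)
  also have "\<dots> \<le> meas \<mu> (cube d) / 2"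
    using meas_gain_tails_le[of A d \<mu> 0] assms by (simp add: cube_def)
  finally show ?thesis
    by (simp add: payoff1_zeros_self)
qed

lemma equilibrium_zeros_zeros:
  assumes "\<forall>X\<in>cube d. \<forall>Y\<in>cube d. vsubset X Y \<longrightarrow> \<mu> Y \<le> \<mu> X"
  shows "equilibrium d \<mu> (zeros d) (zeros d)"
proof -
  have "zeros d \<in> cube d"
    by (simp add: zeros_def cube_def)
  moreover have "payoff2 d \<mu> (zeros d) B = payoff1 d \<mu> B (zeros d)" for B
    by (simp add: payoff1_def payoff2_def Tie_commute)
  ultimately show ?thesis
    unfolding equilibrium_def using payoff1_le_zeros_self[OF _ assms] by simp
qed

lemma map_Not_cube: "map Not ` cube d = cube d"
proof
  show "map Not ` cube d \<subseteq> cube d"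
    by (auto simp: cube_def)
  then have "map Not ` map Not ` cube d \<subseteq> map Not ` cube d"
    by (rule image_mono)
  then show "cube d \<subseteq> map Not ` cube d"
    by (simp add: image_image comp_def)
qed

lemma hamming_map_Not:
  "length X = length Y \<Longrightarrow> hamming (map Not X) (map Not Y) = hamming X Y"
  unfolding hamming_def by (rule arg_cong[where f = card]) auto

lemma meas_image_map_Not: "meas (\<mu> \<circ> map Not) (map Not ` S) = meas \<mu> S"
proof -
  have inj: "inj (map Not)"
    by (simp add: inj_on_def)
  show ?thesis
    by (simp add: meas_def sum.reindex[OF inj_on_subset[OF inj subset_UNIV]] comp_def)
qed

lemma Vor_map_Not:
  assumes "A \<in> cube d" "B \<in> cube d"
  shows "Vor d (map Not A) (map Not B) = map Not ` Vor d A B"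
proof -
  have "Vor d (map Not A) (map Not B)
      = {X \<in> map Not ` cube d. hamming X (map Not A) < hamming X (map Not B)}"
    by (simp add: Vor_def map_Not_cube)
  also have "\<dots> = map Not ` Vor d A B"
    using assms by (auto simp: Vor_def cube_def hamming_map_Not)
  finally show ?thesis .
qed

lemma Tie_map_Not:
  assumes "A \<in> cube d" "B \<in> cube d"
  shows "Tie d (map Not A) (map Not B) = map Not ` Tie d A B"
proof -
  have "Tie d (map Not A) (map Not B)
      = {X \<in> map Not ` cube d. hamming X (map Not A) = hamming X (map Not B)}"
    by (simp add: Tie_def map_Not_cube)
  also have "\<dots> = map Not ` Tie d A B"
    using assms by (auto simp: Tie_def cube_def hamming_map_Not)
  finally show ?thesis .
qed

lemma payoff1_map_Not:
  "A \<in> cube d \<Longrightarrow> B \<in> cube d \<Longrightarrow>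
   payoff1 d (\<mu> \<circ> map Not) (map Not A) (map Not B) = payoff1 d \<mu> A B"
  by (simp add: payoff1_def Vor_map_Not Tie_map_Not meas_image_map_Not)

lemma payoff2_map_Not:
  "A \<in> cube d \<Longrightarrow> B \<in> cube d \<Longrightarrow>
   payoff2 d (\<mu> \<circ> map Not) (map Not A) (map Not B) = payoff2 d \<mu> A B"
  by (simp add: payoff2_def Vor_map_Not Tie_map_Not meas_image_map_Not)

lemma equilibrium_map_Not:
  assumes "equilibrium d \<mu> A B"
  shows "equilibrium d (\<mu> \<circ> map Not) (map Not A) (map Not B)"
proof -
  have A: "A \<in> cube d" and B: "B \<in> cube d"
    and best1: "\<And>A'. A' \<in> cube d \<Longrightarrow> payoff1 d \<mu> A' B \<le> payoff1 d \<mu> A B"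
    and best2: "\<And>B'. B' \<in> cube d \<Longrightarrow> payoff2 d \<mu> A B' \<le> payoff2 d \<mu> A B"
    using assms by (auto simp: equilibrium_def)
  have cube_map_Not: "\<And>X. X \<in> cube d \<Longrightarrow> map Not X \<in> cube d"
    by (simp add: cube_def)
  have "payoff1 d (\<mu> \<circ> map Not) (map Not A') (map Not B)
      \<le> payoff1 d (\<mu> \<circ> map Not) (map Not A) (map Not B)" if "A' \<in> cube d" for A'
    using best1[OF that] that A B by (simp add: payoff1_map_Not)
  moreover have "payoff2 d (\<mu> \<circ> map Not) (map Not A) (map Not B')
      \<le> payoff2 d (\<mu> \<circ> map Not) (map Not A) (map Not B)" if "B' \<in> cube d" for B'
    using best2[OF that] that A B by (simp add: payoff2_map_Not)
  ultimately show ?thesis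
    unfolding equilibrium_def using A B cube_map_Not map_Not_cube by (metis imageE)
qed

lemma equilibrium_ones_ones:
  assumes "\<forall>X\<in>cube d. \<forall>Y\<in>cube d. vsubset X Y \<longrightarrow> \<mu> X \<le> \<mu> Y"
  shows "equilibrium d \<mu> (ones d) (ones d)"
proof -
  have "vsubset X Y \<Longrightarrow> vsubset (map Not Y) (map Not X)" for X Y
    by (auto simp: vsubset_def)
  then have "\<forall>X\<in>cube d. \<forall>Y\<in>cube d. vsubset X Y \<longrightarrow> (\<mu> \<circ> map Not) Y \<le> (\<mu> \<circ> map Not) X"
    using assms by (auto simp: cube_def)
  then have "equilibrium d (\<mu> \<circ> map Not \<circ> map Not) (map Not (zeros d)) (map Not (zeros d))"
    by (intro equilibrium_map_Not equilibrium_zeros_zeros)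
  moreover have "\<mu> \<circ> map Not \<circ> map Not = \<mu>" "map Not (zeros d) = ones d"
    by (simp_all add: fun_eq_iff comp_def zeros_def ones_def)
  ultimately show ?thesis
    by simp
qed

theorem mainTheorem7:
  fixes d :: nat and \<mu> :: "bool list \<Rightarrow> real"
  assumes "prob_dist d \<mu>"
  shows "((\<forall>X \<in> cube d. \<forall>Y \<in> cube d. vsubset X Y \<longrightarrow> \<mu> X \<ge> \<mu> Y)
            \<longrightarrow> equilibrium d \<mu> (zeros d) (zeros d))
       \<and> ((\<forall>X \<in> cube d. \<forall>Y \<in> cube d. vsubset X Y \<longrightarrow> \<mu> X \<le> \<mu> Y)
            \<longrightarrow> equilibrium d \<mu> (ones d) (ones d))"
  using equilibrium_zeros_zeros equilibrium_ones_ones by blast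

end
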